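(* Let $f:X\to X$ be a continuous map of a compact metric space $(X,d)$, and let $\mu$ be an $f$-invariant ergodic Borel probability measure on $X$ with positive metric entropy $h_\mu(f)>0$. Then $\mu$ is an expansive measure of $f$, i.e., there exists $\delta>0$ such that $\mu(\Phi_\delta(x))=0$ for every $x\in X$, where $\Phi_\delta(x)=\{y\in X: d(f^i(y),f^i(x))\le\delta \text{ for all } i\in\mathbb{N}\}$.
   Context: Here $\mathbb{N}=\{0,1,2,\dots\}$. $\Phi_\delta(x)$ is called the dynamical ball of radius $\delta$ around $x$. A Borel probability measure $\mu$ (not necessarily invariant) is called an expansive measure of a measurable map $f$ if there is $\delta>0$ with $\mu(\Phi_\delta(x))=0$ for all $x\in X$. *)

theory Defs
  imports "HOL-Probability.Probability"
begin

definition finite_meas_partition :: "'a measure \<Rightarrow> 'a set set \<Rightarrow> bool" where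
  "finite_meas_partition M P \<longleftrightarrow>
     finite P \<and> P \<subseteq> sets M \<and> disjoint P \<and> \<Union>P = space M"

definition partition_entropy :: "'a measure \<Rightarrow> 'a set set \<Rightarrow> real" where
  "partition_entropy M P =
     (\<Sum>A\<in>P. if measure M A = 0 then 0 else - measure M A * ln (measure M A))"

definition partition_join :: "'a set set \<Rightarrow> 'a set set \<Rightarrow> 'a set set" where
  "partition_join P Q = {A \<inter> B | A B. A \<in> P \<and> B \<in> Q}"

fun dyn_join :: "'a measure \<Rightarrow> ('a \<Rightarrow> 'a) \<Rightarrow> 'a set set \<Rightarrow> nat \<Rightarrow> 'a set set" where
  "dyn_join M f P 0 = {space M}"
| "dyn_join M f P (Suc n) =
     partition_join (dyn_join M f P n) ((\<lambda>A. (f ^^ n) -` A \<inter> space M) ` P)"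

definition entropy_wrt :: "'a measure \<Rightarrow> ('a \<Rightarrow> 'a) \<Rightarrow> 'a set set \<Rightarrow> real" where
  "entropy_wrt M f P = lim (\<lambda>n. partition_entropy M (dyn_join M f P n) / real n)"

definition metric_entropy :: "'a measure \<Rightarrow> ('a \<Rightarrow> 'a) \<Rightarrow> ereal" where
  "metric_entropy M f = (SUP P\<in>{P. finite_meas_partition M P}. ereal (entropy_wrt M f P))"

definition invariant_measure :: "'a measure \<Rightarrow> ('a \<Rightarrow> 'a) \<Rightarrow> bool" where
  "invariant_measure M f \<longleftrightarrow> f \<in> measurable M M \<and> distr M M f = M"

definition ergodic :: "'a measure \<Rightarrow> ('a \<Rightarrow> 'a) \<Rightarrow> bool" where
  "ergodic M f \<longleftrightarrow> invariant_measure M f \<and>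
     (\<forall>A\<in>sets M. f -` A \<inter> space M = A \<longrightarrow> measure M A = 0 \<or> measure M A = 1)"

definition dyn_ball :: "('a::metric_space \<Rightarrow> 'a) \<Rightarrow> real \<Rightarrow> 'a \<Rightarrow> 'a set" where
  "dyn_ball f \<delta> x = {y. \<forall>i::nat. dist ((f ^^ i) y) ((f ^^ i) x) \<le> \<delta>}"

definition expansive_measure :: "'a::metric_space measure \<Rightarrow> ('a \<Rightarrow> 'a) \<Rightarrow> bool" where
  "expansive_measure M f \<longleftrightarrow> (\<exists>\<delta>>0. \<forall>x. emeasure M (dyn_ball f \<delta> x) = 0)"

end

theory Submission
  imports Defs
begin

text \<open>Suppose \<open>\<mu>\<close> is not expansive and fix a finite partition \<open>P\<close>. By regularity each cell
  contains a closed piece carrying almost all of its mass, and distinct pieces are at distance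
  \<open>\<gamma> > 0\<close>. Some dynamical ball of radius \<open>\<delta> < \<gamma> / 2\<close> has positive measure, so by
  ergodicity most orbits enter it within a fixed time \<open>T\<close>, after which they shadow a single
  orbit; from then on the piece visited at each time is determined, and by Markov's inequality
  most orbits spend only a small proportion of the time outside the pieces. Counting the
  resulting codes bounds the entropy of the \<open>n\<close>-fold refinement by \<open>C + \<epsilon> n\<close>, so every
  partition has zero entropy and \<open>h\<^sub>\<mu>(f) = 0\<close>.\<close>

section \<open>Regularity of finite Borel measures\<close>

definition regular_set :: "'a::topological_space measure \<Rightarrow> 'a set \<Rightarrow> bool" where
  "regular_set M A \<longleftrightarrow> (\<forall>e>0. \<exists>F U. closed F \<and> open U \<and> F \<subseteq> A \<and> A \<subseteq> U \<and> measure M (U - F) < e)"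

lemma regular_set_closed:
  fixes M :: "'a::metric_space measure"
  assumes "finite_measure M" "sets M = sets borel" "closed A"
  shows "regular_set M A"
  unfolding regular_set_def
proof (intro allI impI)
  fix e :: real assume "e > 0"
  interpret finite_measure M by fact
  define U where "U n = (\<Union>a\<in>A. ball a (1 / Suc n))" for n :: nat
  have U_sets: "U n - A \<in> sets M" for n
    unfolding assms(2) U_def using assms(3) by (intro sets.Diff borel_open borel_closed) auto
  have "decseq (\<lambda>n. U n - A)"
  proof (rule decseq_SucI)
    fix n
    have "1 / real (Suc (Suc n)) \<le> 1 / Suc n" by (simp add: frac_le)
    then show "U (Suc n) - A \<subseteq> U n - A" unfolding U_def by fastforce
  qed
  then have lim: "(\<lambda>n. measure M (U n - A)) \<longlonglongrightarrow> measure M (\<Inter>n. U n - A)"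
    by (intro finite_Lim_measure_decseq) (auto simp: U_sets)
  have "x \<in> A" if "\<And>n. x \<in> U n" for x
  proof -
    have "\<exists>a\<in>A. dist a x < d" if "d > 0" for d
    proof -
      obtain n where "1 / real (Suc n) < d" using \<open>d > 0\<close> by (rule nat_approx_posE)
      with \<open>x \<in> U n\<close> show ?thesis by (force simp: U_def dist_commute)
    qed
    then show ?thesis using assms(3) closure_approachable closure_closed by metis
  qed
  then have empty: "(\<Inter>n. U n - A) = {}" by blast
  have "eventually (\<lambda>n. measure M (U n - A) < e) sequentially"
    using order_tendstoD(2)[OF lim] \<open>e > 0\<close> unfolding empty by simp
  then obtain n where "measure M (U n - A) < e"
    unfolding eventually_sequentially by blast
  moreover have "open (U n)" "A \<subseteq> U n" by (auto simp: U_def)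
  ultimately show "\<exists>F U. closed F \<and> open U \<and> F \<subseteq> A \<and> A \<subseteq> U \<and> measure M (U - F) < e"
    using assms(3) by blast
qed

lemma regular_set_Compl:
  assumes "regular_set M A"
  shows "regular_set M (UNIV - A)"
  unfolding regular_set_def
proof (intro allI impI)
  fix e :: real assume "e > 0"
  obtain F U where FU: "closed F" "open U" "F \<subseteq> A" "A \<subseteq> U" "measure M (U - F) < e"
    using assms[unfolded regular_set_def, rule_format, OF \<open>e > 0\<close>] by blast
  have "(UNIV - F) - (UNIV - U) = U - F" by blast
  with FU have "closed (UNIV - U) \<and> open (UNIV - F) \<and> UNIV - U \<subseteq> UNIV - A \<and>
      UNIV - A \<subseteq> UNIV - F \<and> measure M ((UNIV - F) - (UNIV - U)) < e"
    by (simp add: closed_Diff open_Diff Diff_mono)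
  then show "\<exists>F U. closed F \<and> open U \<and> F \<subseteq> UNIV - A \<and> UNIV - A \<subseteq> U \<and> measure M (U - F) < e"
    by blast
qed

lemma (in finite_measure) measure_UN_diff_finite_UN_less:
  fixes F :: "nat \<Rightarrow> 'a set"
  assumes "range F \<subseteq> sets M" "e > 0"
  shows "\<exists>N. measure M ((\<Union>i. F i) - (\<Union>i<N. F i)) < e"
proof -
  have "(\<lambda>N. measure M (\<Union>i<N. F i)) \<longlonglongrightarrow> measure M (\<Union>N. \<Union>i<N. F i)"
    using assms(1) by (intro finite_Lim_measure_incseq) (auto simp: incseq_def, force)
  moreover have "(\<Union>N. \<Union>i<N. F i) = (\<Union>i. F i)" by blast
  ultimately have "eventually (\<lambda>N. measure M (\<Union>i. F i) - e < measure M (\<Union>i<N. F i)) sequentially"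
    using assms(2) by (intro order_tendstoD(1)) auto
  then obtain N where N: "measure M (\<Union>i. F i) - e < measure M (\<Union>i<N. F i)"
    unfolding eventually_sequentially by blast
  have "(\<Union>i. F i) \<in> sets M" "(\<Union>i<N. F i) \<in> sets M" using assms(1) by auto
  then show ?thesis using N finite_measure_Diff by (intro exI[of _ N]) (simp add: UN_mono)
qed

lemma regular_set_UN:
  fixes M :: "'a::metric_space measure" and A :: "nat \<Rightarrow> 'a set"
  assumes "finite_measure M" "sets M = sets borel" "\<And>i. regular_set M (A i)"
  shows "regular_set M (\<Union>i. A i)"
  unfolding regular_set_def
proof (intro allI impI)
  fix e :: real assume e: "e > 0"
  interpret finite_measure M by fact
  define c :: "nat \<Rightarrow> real" where "c = (\<lambda>i. e / 4 * (1 / 2) ^ i)"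
  have "c sums (e / 4 * (1 / (1 - 1 / 2)))"
    unfolding c_def by (intro sums_mult geometric_sums) simp
  then have sum_c: "c sums (e / 2)" by simp
  have "c i > 0" for i using e by (simp add: c_def)
  then have "\<forall>i. \<exists>F U. closed F \<and> open U \<and> F \<subseteq> A i \<and> A i \<subseteq> U \<and> measure M (U - F) < c i"
    using assms(3) unfolding regular_set_def by blast
  then obtain F U where FU: "\<And>i. closed (F i)" "\<And>i. open (U i)" "\<And>i. F i \<subseteq> A i"
      "\<And>i. A i \<subseteq> U i" "\<And>i. measure M (U i - F i) < c i"
    by metis
  have F_sets: "F i \<in> sets M" and UF_sets: "U i - F i \<in> sets M" for i
    using FU(1,2) by (simp_all add: assms(2) borel_open borel_closed sets.Diff)
  obtain N where tail: "measure M ((\<Union>i. F i) - (\<Union>i<N. F i)) < e / 2"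
    using measure_UN_diff_finite_UN_less[of F "e / 2"] F_sets e by auto
  have summable: "summable (\<lambda>i. measure M (U i - F i))"
    by (rule summable_comparison_test'[of c 0]) (use FU sum_c in \<open>auto simp: sums_summable less_imp_le\<close>)
  have "measure M (\<Union>i. U i - F i) \<le> (\<Sum>i. measure M (U i - F i))"
    using UF_sets summable by (intro finite_measure_subadditive_countably) auto
  also have "\<dots> \<le> (\<Sum>i. c i)"
    using FU summable sum_c by (intro suminf_le) (auto simp: less_imp_le sums_summable)
  also have "\<dots> = e / 2" using sum_c by (simp add: sums_iff)
  finally have head: "measure M (\<Union>i. U i - F i) \<le> e / 2" .
  have "measure M ((\<Union>i. U i) - (\<Union>i<N. F i))
      \<le> measure M ((\<Union>i. U i - F i) \<union> ((\<Union>i. F i) - (\<Union>i<N. F i)))"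
    using F_sets UF_sets by (intro finite_measure_mono) auto
  also have "\<dots> \<le> measure M (\<Union>i. U i - F i) + measure M ((\<Union>i. F i) - (\<Union>i<N. F i))"
    using F_sets UF_sets by (intro measure_Un_le) auto
  also have "\<dots> < e" using head tail by linarith
  finally have "measure M ((\<Union>i. U i) - (\<Union>i<N. F i)) < e" .
  moreover have "closed (\<Union>i<N. F i)" "open (\<Union>i. U i)" using FU(1,2) by auto
  moreover have "(\<Union>i<N. F i) \<subseteq> (\<Union>i. A i)" "(\<Union>i. A i) \<subseteq> (\<Union>i. U i)"
    using FU(3,4) by (fast, fast)
  ultimately show "\<exists>F U. closed F \<and> open U \<and> F \<subseteq> (\<Union>i. A i) \<and> (\<Union>i. A i) \<subseteq> U \<and> measure M (U - F) < e"
    by blast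
qed

text \<open>The regular sets form a \<open>\<sigma>\<close>-algebra containing the closed sets.\<close>
lemma regular_set_borel:
  fixes M :: "'a::metric_space measure"
  assumes "finite_measure M" "sets M = sets borel" "A \<in> sets M"
  shows "regular_set M A"
proof -
  have "A \<in> sigma_sets UNIV (Collect closed)"
    using assms(2,3) by (simp add: borel_eq_closed)
  then show ?thesis
  proof (induction rule: sigma_sets.induct)
    case (Basic A)
    then show ?case using assms(1,2) by (intro regular_set_closed) auto
  next
    case Empty
    show ?case using assms(1,2) by (intro regular_set_closed) auto
  qed (use assms(1,2) in \<open>auto intro: regular_set_Compl regular_set_UN\<close>)
qed

section \<open>Entropy of partitions\<close>

definition neg_xlnx :: "real \<Rightarrow> real" where
  "neg_xlnx t = (if t = 0 then 0 else - t * ln t)"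

lemma partition_entropy_eq_sum: "partition_entropy M Q = (\<Sum>A\<in>Q. neg_xlnx (measure M A))"
  by (simp add: partition_entropy_def neg_xlnx_def)

lemma neg_xlnx_nonneg: "0 \<le> t \<Longrightarrow> t \<le> 1 \<Longrightarrow> 0 \<le> neg_xlnx t"
  by (auto simp: neg_xlnx_def mult_nonneg_nonpos)

lemma neg_xlnx_add_le:
  assumes "0 \<le> a" "0 \<le> b"
  shows "neg_xlnx (a + b) \<le> neg_xlnx a + neg_xlnx b"
proof (cases "a = 0 \<or> b = 0")
  case True
  then show ?thesis by (auto simp: neg_xlnx_def)
next
  case False
  then have a: "a > 0" and b: "b > 0" using assms by auto
  have "ln a \<le> ln (a + b)" "ln b \<le> ln (a + b)" using a b by auto
  then have "a * ln a + b * ln b \<le> a * ln (a + b) + b * ln (a + b)"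
    using a b by (intro add_mono mult_left_mono) auto
  then show ?thesis using a b by (simp add: neg_xlnx_def algebra_simps)
qed

text \<open>The right-hand side is the tangent line of the concave function at \<open>1 / N\<close>.\<close>
lemma neg_xlnx_le_tangent:
  assumes "p > 0" "N \<ge> 1"
  shows "neg_xlnx p \<le> 1 / N - p + p * ln N"
proof -
  have "ln (1 / (N * p)) \<le> 1 / (N * p) - 1" using assms by (intro ln_le_minus_one) auto
  moreover have "ln (1 / (N * p)) = - ln N - ln p" using assms by (simp add: ln_div ln_mult)
  ultimately have "p * (- ln N - ln p) \<le> p * (1 / (N * p) - 1)" using assms
    by (intro mult_left_mono) auto
  then show ?thesis using assms by (simp add: neg_xlnx_def algebra_simps)
qed

lemma sum_neg_xlnx_le:
  assumes "finite I" "\<And>i. i \<in> I \<Longrightarrow> 0 \<le> p i" "card {i\<in>I. p i \<noteq> 0} \<le> N" "N \<ge> 1"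
  shows "(\<Sum>i\<in>I. neg_xlnx (p i)) \<le> (\<Sum>i\<in>I. p i) * ln N + 1"
proof -
  let ?J = "{i\<in>I. p i \<noteq> 0}"
  have s1: "(\<Sum>i\<in>I. neg_xlnx (p i)) = (\<Sum>i\<in>?J. neg_xlnx (p i))"
    by (rule sum.mono_neutral_right) (auto simp: assms neg_xlnx_def)
  have s2: "(\<Sum>i\<in>I. p i) = (\<Sum>i\<in>?J. p i)"
    by (rule sum.mono_neutral_right) (auto simp: assms)
  have "(\<Sum>i\<in>?J. neg_xlnx (p i)) \<le> (\<Sum>i\<in>?J. 1 / N - p i + p i * ln N)"
    using assms by (intro sum_mono neg_xlnx_le_tangent) (auto simp: le_less)
  also have "\<dots> = card ?J / N - (\<Sum>i\<in>?J. p i) + (\<Sum>i\<in>?J. p i) * ln N"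
    by (simp add: sum.distrib sum_subtractf sum_distrib_right)
  finally have "(\<Sum>i\<in>?J. neg_xlnx (p i)) \<le> card ?J / N - (\<Sum>i\<in>?J. p i) + (\<Sum>i\<in>?J. p i) * ln N" .
  moreover have "card ?J / N \<le> 1" using assms by auto
  moreover have "(\<Sum>i\<in>?J. p i) \<ge> 0" using assms by (intro sum_nonneg) auto
  ultimately show ?thesis unfolding s1 s2 by linarith
qed

lemma partition_entropy_nonneg:
  assumes "prob_space M" "Q \<subseteq> sets M"
  shows "0 \<le> partition_entropy M Q"
proof -
  interpret prob_space M by fact
  show ?thesis unfolding partition_entropy_eq_sum
    by (intro sum_nonneg neg_xlnx_nonneg) (auto simp: prob_le_1)
qed

text \<open>Cutting every block along \<open>E\<close>: inside \<open>E\<close> at most \<open>N\<^sub>1\<close> blocks carry mass,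
  outside \<open>E\<close> at most \<open>N\<^sub>2\<close> blocks share the mass of the complement.\<close>
lemma partition_entropy_split_le:
  assumes "prob_space M" "finite Q" "Q \<subseteq> sets M" "disjoint Q" "E \<in> sets M"
    and "card {A\<in>Q. A \<inter> E \<noteq> {}} \<le> N\<^sub>1" "N\<^sub>1 \<ge> 1"
    and "card Q \<le> N\<^sub>2" "N\<^sub>2 \<ge> 1"
  shows "partition_entropy M Q \<le> ln N\<^sub>1 + measure M (space M - E) * ln N\<^sub>2 + 2"
proof -
  interpret prob_space M by fact
  have A_sets: "A \<in> sets M" if "A \<in> Q" for A using assms(3) that by auto
  have split: "measure M A = measure M (A \<inter> E) + measure M (A - E)" if "A \<in> Q" for A
    using A_sets[OF that] assms(5) finite_measure_Union[of "A \<inter> E" "A - E"]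
    by (simp add: Int_Diff_Un Int_Diff_disjoint)
  have "partition_entropy M Q \<le> (\<Sum>A\<in>Q. neg_xlnx (measure M (A \<inter> E)) + neg_xlnx (measure M (A - E)))"
    unfolding partition_entropy_eq_sum by (intro sum_mono) (simp add: split neg_xlnx_add_le)
  also have "\<dots> = (\<Sum>A\<in>Q. neg_xlnx (measure M (A \<inter> E))) + (\<Sum>A\<in>Q. neg_xlnx (measure M (A - E)))"
    by (rule sum.distrib)
  also have "\<dots> \<le> ((\<Sum>A\<in>Q. measure M (A \<inter> E)) * ln N\<^sub>1 + 1) + ((\<Sum>A\<in>Q. measure M (A - E)) * ln N\<^sub>2 + 1)"
  proof (intro add_mono sum_neg_xlnx_le)
    have "{A\<in>Q. measure M (A \<inter> E) \<noteq> 0} \<subseteq> {A\<in>Q. A \<inter> E \<noteq> {}}" by auto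
    from card_mono[OF _ this] show "card {A\<in>Q. measure M (A \<inter> E) \<noteq> 0} \<le> N\<^sub>1"
      using assms(2,6) by simp
    have "card {A\<in>Q. measure M (A - E) \<noteq> 0} \<le> card Q"
      using assms(2) by (intro card_mono) auto
    then show "card {A\<in>Q. measure M (A - E) \<noteq> 0} \<le> N\<^sub>2"
      using assms(8) by linarith
  qed (use assms in auto)
  also have "\<dots> \<le> (1 * ln N\<^sub>1 + 1) + (measure M (space M - E) * ln N\<^sub>2 + 1)"
  proof -
    have disj: "disjoint_family_on (\<lambda>A. A \<inter> E) Q" "disjoint_family_on (\<lambda>A. A - E) Q"
      using assms(4) by (auto simp: disjoint_family_on_def disjoint_def)
    have "(\<Sum>A\<in>Q. measure M (A \<inter> E)) = measure M (\<Union>A\<in>Q. A \<inter> E)"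
      using A_sets assms(2,5) disj by (intro finite_measure_finite_Union[symmetric]) auto
    then have "(\<Sum>A\<in>Q. measure M (A \<inter> E)) \<le> 1" by simp
    moreover have "(\<Sum>A\<in>Q. measure M (A - E)) = measure M (\<Union>A\<in>Q. A - E)"
      using A_sets assms(2,5) disj by (intro finite_measure_finite_Union[symmetric]) auto
    then have "(\<Sum>A\<in>Q. measure M (A - E)) \<le> measure M (space M - E)"
      using A_sets sets.sets_into_space assms(2,5) by (auto intro!: finite_measure_mono)
    ultimately show ?thesis
      using assms(7,9) by (intro add_mono mult_right_mono) auto
  qed
  finally show ?thesis by simp
qed

section \<open>Counting sparse words\<close>

definition option_words :: "'b set \<Rightarrow> nat \<Rightarrow> 'b option list set" where
  "option_words S n = {ws. set ws \<subseteq> insert None (Some ` S) \<and> length ws = n}"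

definition count_some :: "'b option list \<Rightarrow> nat" where
  "count_some ws = length (filter (\<lambda>x. x \<noteq> None) ws)"

lemma finite_option_words: "finite S \<Longrightarrow> finite (option_words S n)"
  unfolding option_words_def by (intro finite_lists_length_eq) auto

lemma count_some_map_upt: "count_some (map g [0..<n]) = card {j. j < n \<and> g j \<noteq> None}"
proof -
  have "{i. i < length (map g [0..<n]) \<and> map g [0..<n] ! i \<noteq> None} = {j. j < n \<and> g j \<noteq> None}"
    by auto
  then show ?thesis by (simp add: count_some_def length_filter_conv_card)
qed

lemma sum_option_words_power_count_some:
  fixes q :: real
  assumes "finite S"
  shows "(\<Sum>ws\<in>option_words S n. q ^ count_some ws) = (1 + card S * q) ^ n"
proof (induction n)
  case 0
  have "option_words S 0 = {[]}" by (auto simp: option_words_def)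
  then show ?case by (simp add: count_some_def)
next
  case (Suc n)
  let ?L = "insert None (Some ` S)"
  let ?w = "\<lambda>x. if x = None then 1 else q"
  have eq: "option_words S (Suc n) = (\<lambda>(x, ws). x # ws) ` (?L \<times> option_words S n)"
    by (auto simp: option_words_def length_Suc_conv image_iff)
  have inj: "inj_on (\<lambda>(x, ws). x # ws) (?L \<times> option_words S n)" by (auto simp: inj_on_def)
  have letters: "(\<Sum>x\<in>?L. ?w x) = 1 + card S * q"
  proof -
    have "(\<Sum>x\<in>Some ` S. ?w x) = (\<Sum>x\<in>Some ` S. q)" by (intro sum.cong) auto
    then show ?thesis using assms by (simp add: sum.insert card_image)
  qed
  have "(\<Sum>ws\<in>option_words S (Suc n). q ^ count_some ws)
      = (\<Sum>(x, ws)\<in>?L \<times> option_words S n. q ^ count_some (x # ws))"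
    unfolding eq by (subst sum.reindex[OF inj]) (simp add: case_prod_beta)
  also have "\<dots> = (\<Sum>x\<in>?L. \<Sum>ws\<in>option_words S n. ?w x * q ^ count_some ws)"
    by (subst sum.cartesian_product[symmetric]) (auto simp: count_some_def intro!: sum.cong)
  also have "\<dots> = (\<Sum>x\<in>?L. ?w x) * (\<Sum>ws\<in>option_words S n. q ^ count_some ws)"
    by (simp add: sum_product)
  finally show ?case using Suc letters by simp
qed

lemma card_sparse_option_words_le:
  fixes q :: real
  assumes "finite S" "0 < q" "q \<le> 1"
  shows "card {ws\<in>option_words S n. count_some ws \<le> r} \<le> (1 + card S * q) ^ n / q ^ r"
proof -
  let ?W = "{ws\<in>option_words S n. count_some ws \<le> r}"
  have "real (card ?W) * q ^ r = (\<Sum>ws\<in>?W. q ^ r)" by simp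
  also have "\<dots> \<le> (\<Sum>ws\<in>?W. q ^ count_some ws)"
    using assms by (intro sum_mono power_decreasing) auto
  also have "\<dots> \<le> (\<Sum>ws\<in>option_words S n. q ^ count_some ws)"
    using assms finite_option_words[OF assms(1)] by (intro sum_mono2) auto
  also have "\<dots> = (1 + card S * q) ^ n" by (rule sum_option_words_power_count_some[OF assms(1)])
  finally show ?thesis using assms by (simp add: field_simps)
qed

lemma ln_card_sparse_option_words_le:
  fixes q :: real
  assumes "finite S" "0 < q" "q \<le> 1"
  shows "ln (card {ws\<in>option_words S n. count_some ws \<le> r}) \<le> n * ln (1 + card S * q) + r * ln (1 / q)"
proof -
  let ?W = "{ws\<in>option_words S n. count_some ws \<le> r}"
  have "replicate n None \<in> ?W" by (auto simp: option_words_def count_some_def)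
  then have "card ?W \<ge> 1"
    using finite_option_words[OF assms(1)] by (auto simp: Suc_le_eq card_gt_0_iff)
  have "1 + card S * q > 0" using assms(2) by (simp add: add_pos_nonneg)
  have "ln (card ?W) \<le> ln ((1 + card S * q) ^ n / q ^ r)"
    using card_sparse_option_words_le[OF assms] \<open>card ?W \<ge> 1\<close> \<open>1 + card S * q > 0\<close> assms(2)
    by (subst ln_le_cancel_iff) auto
  also have "\<dots> = ln ((1 + card S * q) ^ n) - ln (q ^ r)"
    using assms(2) \<open>1 + card S * q > 0\<close> by (simp add: ln_div)
  also have "\<dots> = n * ln (1 + card S * q) + r * ln (1 / q)"
    using assms(2) \<open>1 + card S * q > 0\<close> by (simp add: ln_realpow ln_div)
  finally show ?thesis .
qed

section \<open>Dynamical refinements\<close>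

lemma dyn_join_sets:
  assumes "P \<subseteq> sets M" "f \<in> M \<rightarrow>\<^sub>M M"
  shows "dyn_join M f P n \<subseteq> sets M"
proof (induction n)
  case (Suc n)
  show ?case
  proof
    fix A assume "A \<in> dyn_join M f P (Suc n)"
    then obtain A' p where A: "A = A' \<inter> ((f ^^ n) -` p \<inter> space M)" "A' \<in> dyn_join M f P n" "p \<in> P"
      unfolding dyn_join.simps partition_join_def by blast
    have "(f ^^ n) -` p \<inter> space M \<in> sets M"
      using measurable_sets[OF measurable_compose_n[OF assms(2)]] A(3) assms(1) by blast
    with A Suc.IH show "A \<in> sets M" by blast
  qed
qed simp

lemma card_dyn_join_le:
  assumes "finite P"
  shows "finite (dyn_join M f P n) \<and> card (dyn_join M f P n) \<le> card P ^ n"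
proof (induction n)
  case (Suc n)
  let ?Q = "dyn_join M f P n" and ?R = "(\<lambda>A. (f ^^ n) -` A \<inter> space M) ` P"
  have "dyn_join M f P (Suc n) = (\<lambda>(A, B). A \<inter> B) ` (?Q \<times> ?R)"
    by (auto simp: partition_join_def)
  moreover have "finite ?R" "card ?R \<le> card P" using assms by (auto intro: card_image_le)
  moreover have "card ((\<lambda>(A, B). A \<inter> B) ` (?Q \<times> ?R)) \<le> card ?Q * card ?R"
    using Suc.IH \<open>finite ?R\<close> by (metis card_cartesian_product card_image_le finite_cartesian_product)
  moreover have "card ?Q * card ?R \<le> card P ^ n * card P"
    using Suc.IH \<open>card ?R \<le> card P\<close> by (intro mult_mono) auto
  ultimately show ?case
    using Suc.IH by (simp add: mult.commute)
qed simp

lemma disjoint_partition_join: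
  assumes "disjoint P" "disjoint Q"
  shows "disjoint (partition_join P Q)"
proof (rule disjointI)
  fix C C' assume "C \<in> partition_join P Q" "C' \<in> partition_join P Q" "C \<noteq> C'"
  then obtain A B A' B' where "C = A \<inter> B" "C' = A' \<inter> B'" "A \<in> P" "B \<in> Q" "A' \<in> P" "B' \<in> Q"
    "A \<noteq> A' \<or> B \<noteq> B'"
    unfolding partition_join_def by blast
  with assms show "C \<inter> C' = {}" by (auto dest: disjointD)
qed

lemma disjoint_dyn_join:
  assumes "disjoint P"
  shows "disjoint (dyn_join M f P n)"
proof (induction n)
  case (Suc n)
  have "disjoint ((\<lambda>A. (f ^^ n) -` A \<inter> space M) ` P)"
    using assms by (auto intro!: disjointI dest: disjointD)
  with Suc.IH show ?case by (simp add: disjoint_partition_join)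
qed simp

lemma dyn_join_same_itinerary:
  assumes "A \<in> dyn_join M f P n" "y \<in> A" "z \<in> space M"
    and "\<And>j p. j < n \<Longrightarrow> p \<in> P \<Longrightarrow> (f ^^ j) y \<in> p \<longleftrightarrow> (f ^^ j) z \<in> p"
  shows "z \<in> A"
  using assms
proof (induction n arbitrary: A)
  case (Suc n)
  then obtain A' p where A: "A = A' \<inter> ((f ^^ n) -` p \<inter> space M)" "A' \<in> dyn_join M f P n" "p \<in> P"
    unfolding dyn_join.simps partition_join_def by blast
  have "z \<in> A'"
    using Suc.IH[OF A(2)] Suc.prems(2-4) A(1) by simp
  moreover have "(f ^^ n) z \<in> p"
    using Suc.prems(4)[of n p] Suc.prems(2) A by simp
  ultimately show ?case using A(1) Suc.prems(3) by simp
qed simp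

lemma card_blocks_meeting_le:
  assumes "finite (D ` E)" "disjoint Q"
    and same: "\<And>A y z. A \<in> Q \<Longrightarrow> y \<in> A \<inter> E \<Longrightarrow> z \<in> E \<Longrightarrow> D y = D z \<Longrightarrow> z \<in> A"
  shows "card {A\<in>Q. A \<inter> E \<noteq> {}} \<le> card (D ` E)"
proof -
  define pt where "pt A = (SOME y. y \<in> A \<inter> E)" for A
  have pt: "pt A \<in> A \<inter> E" if "A \<inter> E \<noteq> {}" for A
    unfolding pt_def by (rule someI_ex) (use that in blast)
  have "inj_on (D \<circ> pt) {A\<in>Q. A \<inter> E \<noteq> {}}"
  proof (rule inj_onI)
    fix A B assume A: "A \<in> {A\<in>Q. A \<inter> E \<noteq> {}}" and B: "B \<in> {A\<in>Q. A \<inter> E \<noteq> {}}"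
      and "(D \<circ> pt) A = (D \<circ> pt) B"
    then have "pt B \<in> A" "pt B \<in> B" using same[of A "pt A" "pt B"] pt by auto
    then show "A = B" using A B \<open>disjoint Q\<close> by (auto simp: disjoint_def)
  qed
  moreover have "(D \<circ> pt) ` {A\<in>Q. A \<inter> E \<noteq> {}} \<subseteq> D ` E" using pt by auto
  ultimately show ?thesis using assms(1) by (intro card_inj_on_le)
qed

section \<open>Invariance and ergodicity\<close>

lemma invariant_measure_funpow:
  assumes "invariant_measure M f"
  shows "invariant_measure M (f ^^ n)"
proof (induction n)
  case 0
  then show ?case by (simp add: invariant_measure_def id_def)
next
  case (Suc n)
  have f: "f \<in> M \<rightarrow>\<^sub>M M" "distr M M f = M" using assms by (auto simp: invariant_measure_def)
  have g: "f ^^ n \<in> M \<rightarrow>\<^sub>M M" "distr M M (f ^^ n) = M" using Suc.IH by (auto simp: invariant_measure_def)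
  have "f ^^ n \<circ> f \<in> M \<rightarrow>\<^sub>M M" by (rule measurable_comp[OF f(1) g(1)])
  moreover have "distr M M (f ^^ n \<circ> f) = M" using distr_distr[OF g(1) f(1)] f(2) g(2) by simp
  ultimately show ?case unfolding invariant_measure_def funpow_Suc_right by blast
qed

lemma measure_vimage_invariant:
  assumes "invariant_measure M f" "S \<in> sets M"
  shows "measure M (f -` S \<inter> space M) = measure M S"
  using measure_distr[of f M M S] assms by (simp add: invariant_measure_def)

lemma invariant_measure_funpow_vimage_sets:
  assumes "invariant_measure M f" "space M = UNIV" "S \<in> sets M"
  shows "(f ^^ m) -` S \<in> sets M"
  using measurable_sets[OF invariant_measure_funpow[OF assms(1), unfolded invariant_measure_def,
      THEN conjunct1] assms(3)] assms(2) by simp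

text \<open>The points whose whole forward orbit stays in \<open>U\<close> form a strictly invariant set of the
  same measure, since the preimages \<open>f\<^sup>-\<^sup>m U\<close> decrease and all have the measure of \<open>U\<close>.\<close>
lemma subinvariant_set_invariant_core:
  assumes "finite_measure M" "invariant_measure M f" "space M = UNIV" "U \<in> sets M" "f -` U \<subseteq> U"
  obtains A where "A \<in> sets M" "f -` A = A" "measure M A = measure M U"
proof
  interpret finite_measure M by fact
  define V where "V m = (f ^^ m) -` U" for m
  have V_sets: "V m \<in> sets M" for m
    unfolding V_def using assms(2-4) by (rule invariant_measure_funpow_vimage_sets)
  have V_Suc: "V (Suc m) = f -` V m" for m
    by (simp only: V_def funpow_Suc_right vimage_comp)
  have V_dec: "V (Suc m) \<subseteq> V m" for m
    using assms(5) by (auto simp: V_def)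
  have lim: "(\<lambda>m. measure M (V m)) \<longlonglongrightarrow> measure M (\<Inter>m. V m)"
    using V_sets V_dec by (intro finite_Lim_measure_decseq) (auto intro: decseq_SucI)
  have measure_V: "measure M (V m) = measure M U" for m
    using measure_vimage_invariant[OF invariant_measure_funpow[OF assms(2)] assms(4), of m] assms(3)
    by (simp add: V_def)
  then have "(\<lambda>m. measure M (V m)) = (\<lambda>m. measure M U)" by (intro ext) (rule measure_V)
  then show "measure M (\<Inter>m. V m) = measure M U"
    using LIMSEQ_unique[OF lim] by simp
  show "(\<Inter>m. V m) \<in> sets M" using V_sets by auto
  have "f -` (\<Inter>m. V m) = (\<Inter>m. V (Suc m))" by (auto simp: V_Suc)
  also have "\<dots> = (\<Inter>m. V m)"
  proof
    show "(\<Inter>m. V (Suc m)) \<subseteq> (\<Inter>m. V m)"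
    proof
      fix y assume y: "y \<in> (\<Inter>m. V (Suc m))"
      have "y \<in> V m" for m using y V_dec[of 0] by (cases m) auto
      then show "y \<in> (\<Inter>m. V m)" by blast
    qed
  qed auto
  finally show "f -` (\<Inter>m. V m) = (\<Inter>m. V m)" .
qed

lemma ergodic_hits_ae:
  assumes erg: "ergodic M f" and "prob_space M" and UNIV: "space M = UNIV"
    and B: "B \<in> sets M" "measure M B > 0"
  shows "measure M (\<Union>t. (f ^^ t) -` B) = 1"
proof -
  interpret prob_space M by fact
  have inv: "invariant_measure M f" using erg by (simp add: ergodic_def)
  define U where "U = (\<Union>t. (f ^^ t) -` B)"
  have "U \<in> sets M"
    unfolding U_def using invariant_measure_funpow_vimage_sets[OF inv UNIV B(1)] by auto
  moreover have "f -` U \<subseteq> U"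
  proof
    fix y assume "y \<in> f -` U"
    then obtain t where "(f ^^ t) (f y) \<in> B" by (auto simp: U_def)
    then have "(f ^^ Suc t) y \<in> B" by (simp add: funpow_Suc_right del: funpow.simps)
    then show "y \<in> U" unfolding U_def by blast
  qed
  ultimately obtain A where A: "A \<in> sets M" "f -` A = A" "measure M A = measure M U"
    using subinvariant_set_invariant_core[OF finite_measure_axioms inv UNIV] by blast
  have "B \<subseteq> U" unfolding U_def by (auto intro!: exI[of _ 0])
  then have "measure M B \<le> measure M U" using \<open>U \<in> sets M\<close> by (rule finite_measure_mono)
  with A B(2) have "measure M A \<noteq> 0" by simp
  moreover have "\<forall>A\<in>sets M. f -` A \<inter> space M = A \<longrightarrow> measure M A = 0 \<or> measure M A = 1"
    using erg by (simp add: ergodic_def)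
  ultimately have "measure M A = 1" using A(1,2) UNIV by auto
  then show ?thesis using A(3) by (simp add: U_def)
qed

lemma ergodic_hits_before:
  assumes "ergodic M f" "prob_space M" "space M = UNIV" "B \<in> sets M" "measure M B > 0" "e > 0"
  shows "\<exists>T\<ge>1. 1 - e \<le> measure M {y. \<exists>t<T. (f ^^ t) y \<in> B}"
proof -
  interpret prob_space M by fact
  have inv: "invariant_measure M f" using assms(1) by (simp add: ergodic_def)
  define V where "V T = (\<Union>t<T. (f ^^ t) -` B)" for T
  have V_sets: "V T \<in> sets M" for T
    using invariant_measure_funpow_vimage_sets[OF inv assms(3,4)] unfolding V_def by auto
  have "incseq V" unfolding incseq_def V_def by (intro allI impI UN_mono) auto
  then have "(\<lambda>T. measure M (V T)) \<longlonglongrightarrow> measure M (\<Union>T. V T)"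
    using V_sets by (intro finite_Lim_measure_incseq) auto
  moreover have "(\<Union>T. V T) = (\<Union>t. (f ^^ t) -` B)" unfolding V_def by blast
  ultimately have "(\<lambda>T. measure M (V T)) \<longlonglongrightarrow> 1" using ergodic_hits_ae[OF assms(1-5)] by simp
  then have "eventually (\<lambda>T. 1 - e < measure M (V T)) sequentially"
    using assms(6) by (intro order_tendstoD(1)) auto
  then obtain N where "\<And>T. T \<ge> N \<Longrightarrow> 1 - e < measure M (V T)"
    unfolding eventually_sequentially by blast
  moreover have "V T = {y. \<exists>t<T. (f ^^ t) y \<in> B}" for T unfolding V_def by auto
  ultimately show ?thesis by (intro exI[of _ "max N 1"]) (auto intro: less_imp_le)
qed

definition visits :: "('a \<Rightarrow> 'a) \<Rightarrow> 'a set \<Rightarrow> nat \<Rightarrow> 'a \<Rightarrow> nat" where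
  "visits f S n y = card {j\<in>{..<n}. (f ^^ j) y \<in> S}"

lemma visits_eq_sum_indicator: "real (visits f S n y) = (\<Sum>j<n. indicator S ((f ^^ j) y))"
proof -
  have "real (visits f S n y) = (\<Sum>j\<in>{j\<in>{..<n}. (f ^^ j) y \<in> S}. 1)" by (simp add: visits_def)
  also have "\<dots> = (\<Sum>j<n. if (f ^^ j) y \<in> S then 1 else 0)" by (rule sum.inter_filter) simp
  also have "\<dots> = (\<Sum>j<n. indicator S ((f ^^ j) y))" by (intro sum.cong) (auto simp: indicator_def)
  finally show ?thesis .
qed

lemma borel_measurable_visits:
  assumes "f \<in> M \<rightarrow>\<^sub>M M" "S \<in> sets M"
  shows "(\<lambda>y. real (visits f S n y)) \<in> borel_measurable M"
  unfolding visits_eq_sum_indicator using assms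
  by (intro borel_measurable_sum measurable_compose[OF measurable_compose_n borel_measurable_indicator])

text \<open>By invariance the expected number of visits is \<open>n \<mu>(S)\<close>; then apply Markov's inequality.\<close>
lemma measure_visits_ge_le:
  assumes "prob_space M" "invariant_measure M f" "S \<in> sets M" "c > 0"
  shows "measure M {y\<in>space M. c \<le> real (visits f S n y)} \<le> n * measure M S / c"
proof -
  interpret prob_space M by fact
  have f: "f ^^ j \<in> M \<rightarrow>\<^sub>M M" "distr M M (f ^^ j) = M" for j
    using invariant_measure_funpow[OF assms(2)] by (auto simp: invariant_measure_def)
  have "emeasure M S < \<infinity>" by (simp add: less_top[symmetric])
  then have "integrable M (indicator S :: _ \<Rightarrow> real)"
    using assms(3) by (rule integrable_real_indicator[rotated])
  then have int: "integrable M (\<lambda>y. indicator S ((f ^^ j) y) :: real)" for j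
    using integrable_distr_eq[OF f(1), of "indicator S :: _ \<Rightarrow> real"] f(2) assms(3) by simp
  have "integral\<^sup>L M (\<lambda>y. real (visits f S n y)) = (\<Sum>j<n. integral\<^sup>L M (\<lambda>y. indicator S ((f ^^ j) y)))"
    unfolding visits_eq_sum_indicator using int by (rule Bochner_Integration.integral_sum)
  also have "\<dots> = (\<Sum>j<n. measure M S)"
    using integral_distr[OF f(1), of "indicator S :: _ \<Rightarrow> real"] f(2) assms(3) by simp
  finally have "integral\<^sup>L M (\<lambda>y. real (visits f S n y)) = n * measure M S" by simp
  moreover have "measure M {y\<in>space M. c \<le> real (visits f S n y)}
      \<le> integral\<^sup>L M (\<lambda>y. real (visits f S n y)) / c"
    using int assms(4) unfolding visits_eq_sum_indicator
    by (intro integral_Markov_inequality_measure) (auto simp: sum_nonneg)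
  ultimately show ?thesis by simp
qed

lemma dyn_ball_sets:
  fixes f :: "'a::metric_space \<Rightarrow> 'a"
  assumes "f \<in> M \<rightarrow>\<^sub>M M" "sets M = sets borel"
  shows "dyn_ball f \<delta> x \<in> sets M"
proof -
  have UNIV: "space M = UNIV" using sets_eq_imp_space_eq[OF assms(2)] by simp
  have "dyn_ball f \<delta> x = (\<Inter>i. (f ^^ i) -` cball ((f ^^ i) x) \<delta> \<inter> space M)"
    using UNIV by (auto simp: dyn_ball_def dist_commute)
  also have "\<dots> \<in> sets M"
    using measurable_sets[OF measurable_compose_n[OF assms(1)]] assms(2)
    by (intro sets.countable_INT') (auto simp: borel_closed)
  finally show ?thesis .
qed

section \<open>Entropy of refinements under shadowing\<close>

lemma finite_closed_sets_separated:
  fixes K :: "'i \<Rightarrow> 'a::metric_space set"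
  assumes "compact (UNIV :: 'a set)" "finite I" "\<And>i. i \<in> I \<Longrightarrow> closed (K i)"
    and "\<And>i j. i \<in> I \<Longrightarrow> j \<in> I \<Longrightarrow> i \<noteq> j \<Longrightarrow> K i \<inter> K j = {}"
  shows "\<exists>\<gamma>>0. \<forall>i\<in>I. \<forall>j\<in>I. i \<noteq> j \<longrightarrow> (\<forall>u\<in>K i. \<forall>v\<in>K j. \<gamma> \<le> dist u v)"
proof -
  define G where "G = {setdist (K i) (K j) | i j. i \<in> I \<and> j \<in> I \<and> i \<noteq> j \<and> K i \<noteq> {} \<and> K j \<noteq> {}}"
  have "finite G"
  proof -
    have "G \<subseteq> (\<lambda>(i, j). setdist (K i) (K j)) ` (I \<times> I)" unfolding G_def by auto
    then show ?thesis using assms(2) finite_subset by blast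
  qed
  have G_pos: "g > 0" if "g \<in> G" for g
  proof -
    obtain i j where "g = setdist (K i) (K j)" "i \<in> I" "j \<in> I" "i \<noteq> j" "K i \<noteq> {}" "K j \<noteq> {}"
      using \<open>g \<in> G\<close> unfolding G_def by blast
    moreover have "compact (K i)"
      using compact_Int_closed[OF assms(1) assms(3)[OF \<open>i \<in> I\<close>]] by simp
    ultimately show ?thesis using assms(3,4) setdist_gt_0_compact_closed by metis
  qed
  define \<gamma> where "\<gamma> = Min (insert 1 G)"
  have "\<gamma> > 0" unfolding \<gamma>_def using \<open>finite G\<close> G_pos by (auto simp: Min_gr_iff)
  moreover have "\<gamma> \<le> dist u v" if "i \<in> I" "j \<in> I" "i \<noteq> j" "u \<in> K i" "v \<in> K j" for i j u v
  proof -
    have "setdist (K i) (K j) \<in> G" unfolding G_def using that by blast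
    then have "\<gamma> \<le> setdist (K i) (K j)" unfolding \<gamma>_def using \<open>finite G\<close> by simp
    also have "\<dots> \<le> dist u v" by (rule setdist_le_dist[OF \<open>u \<in> K i\<close> \<open>v \<in> K j\<close>])
    finally show ?thesis .
  qed
  ultimately show ?thesis by blast
qed

lemma card_dyn_join_meeting_le:
  assumes "disjoint P" "E \<subseteq> space M" "D ` E \<subseteq> Z" "finite Z"
    and same: "\<And>y z j p. y \<in> E \<Longrightarrow> z \<in> E \<Longrightarrow> D y = D z \<Longrightarrow> j < n \<Longrightarrow> p \<in> P \<Longrightarrow>
      (f ^^ j) y \<in> p \<longleftrightarrow> (f ^^ j) z \<in> p"
  shows "card {A\<in>dyn_join M f P n. A \<inter> E \<noteq> {}} \<le> card Z"
proof -
  have "card {A\<in>dyn_join M f P n. A \<inter> E \<noteq> {}} \<le> card (D ` E)"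
  proof (rule card_blocks_meeting_le)
    show "finite (D ` E)" using assms(3,4) by (rule finite_subset)
    show "disjoint (dyn_join M f P n)" using assms(1) by (rule disjoint_dyn_join)
    fix A y z assume A: "A \<in> dyn_join M f P n" and "y \<in> A \<inter> E" "z \<in> E" "D y = D z"
    show "z \<in> A"
    proof (rule dyn_join_same_itinerary[OF A])
      show "y \<in> A" "z \<in> space M" using \<open>y \<in> A \<inter> E\<close> \<open>z \<in> E\<close> assms(2) by auto
      show "(f ^^ j) y \<in> p \<longleftrightarrow> (f ^^ j) z \<in> p" if "j < n" "p \<in> P" for j p
        using same[of y z j p] \<open>y \<in> A \<inter> E\<close> \<open>z \<in> E\<close> \<open>D y = D z\<close> that by blast
    qed
  qed
  also have "\<dots> \<le> card Z" using assms(4,3) by (rule card_mono)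
  finally show ?thesis .
qed

lemma partition_cell:
  assumes "disjoint P" "\<Union>P = UNIV"
  obtains cell where "\<And>z. cell z \<in> P" "\<And>z p. p \<in> P \<Longrightarrow> z \<in> p \<longleftrightarrow> cell z = p"
proof -
  have "\<forall>z. \<exists>p. p \<in> P \<and> z \<in> p" using assms(2) by blast
  then obtain cell where cell: "\<And>z. cell z \<in> P \<and> z \<in> cell z"
    unfolding choice_iff by blast
  show ?thesis
  proof (rule that)
    show "cell z \<in> P" for z using cell by blast
    show "z \<in> p \<longleftrightarrow> cell z = p" if "p \<in> P" for p z
      using cell[of z] disjointD[OF assms(1), of "cell z" p] that by blast
  qed
qed

lemma dist_funpow_le_dyn_ball:
  assumes "(f ^^ t) y \<in> dyn_ball f \<delta> x" "(f ^^ t) z \<in> dyn_ball f \<delta> x" "t \<le> j"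
  shows "dist ((f ^^ j) y) ((f ^^ j) z) \<le> 2 * \<delta>"
proof -
  have shadow: "dist ((f ^^ j) v) ((f ^^ (j - t)) x) \<le> \<delta>" if "(f ^^ t) v \<in> dyn_ball f \<delta> x" for v
  proof -
    have "(f ^^ j) v = (f ^^ (j - t)) ((f ^^ t) v)"
      using assms(3) by (metis funpow_add le_add_diff_inverse2 o_apply)
    then show ?thesis using that by (simp add: dyn_ball_def)
  qed
  show ?thesis
    using shadow[OF assms(1)] shadow[OF assms(2)] dist_triangle2[of "(f ^^ j) y" "(f ^^ j) z" "(f ^^ (j - t)) x"]
    by linarith
qed

text \<open>A point of \<open>E\<close> enters the dynamical ball before time \<open>T\<close>; from then on its orbit
  shadows that of \<open>x\<close>, so whenever it lies in a piece \<open>K p\<close> the piece is determined by the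
  time. The block of a point is therefore coded by its entry time and a word recording the cells
  only before entry or outside all pieces (\<^term>\<open>None\<close> elsewhere).\<close>
lemma card_blocks_meeting_returning_le:
  fixes f :: "'a::metric_space \<Rightarrow> 'a"
  assumes UNIV: "space M = UNIV" and P: "finite_meas_partition M P"
    and K: "\<And>p. p \<in> P \<Longrightarrow> K p \<subseteq> p"
    and sep: "\<And>p q u v. p \<in> P \<Longrightarrow> q \<in> P \<Longrightarrow> p \<noteq> q \<Longrightarrow> u \<in> K p \<Longrightarrow> v \<in> K q \<Longrightarrow> 2 * \<delta> < dist u v"
    and hit: "\<And>y. y \<in> E \<Longrightarrow> \<exists>t<T. (f ^^ t) y \<in> dyn_ball f \<delta> x"
    and few: "\<And>y. y \<in> E \<Longrightarrow> visits f (- (\<Union>p\<in>P. K p)) n y \<le> m"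
  shows "card {A\<in>dyn_join M f P n. A \<inter> E \<noteq> {}} \<le> T * card {ws\<in>option_words P n. count_some ws \<le> T + m}"
proof -
  define KK where "KK = (\<Union>p\<in>P. K p)"
  define W where "W = {ws\<in>option_words P n. count_some ws \<le> T + m}"
  have "finite P" "disjoint P" "\<Union>P = UNIV" using P UNIV by (auto simp: finite_meas_partition_def)
  then obtain cell where cell: "\<And>z. cell z \<in> P" "\<And>z p. p \<in> P \<Longrightarrow> z \<in> p \<longleftrightarrow> cell z = p"
    using partition_cell by blast
  define tt where "tt y = (LEAST t. (f ^^ t) y \<in> dyn_ball f \<delta> x)" for y
  have tt: "tt y < T" "(f ^^ tt y) y \<in> dyn_ball f \<delta> x" if y: "y \<in> E" for y
  proof -
    obtain t where "t < T" "(f ^^ t) y \<in> dyn_ball f \<delta> x" using hit[OF y] by blast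
    moreover have "tt y \<le> t" unfolding tt_def by (rule Least_le) fact
    ultimately show "tt y < T" by simp
    show "(f ^^ tt y) y \<in> dyn_ball f \<delta> x" unfolding tt_def by (rule LeastI) fact
  qed
  define w where "w y j = (if j < tt y \<or> (f ^^ j) y \<notin> KK then Some (cell ((f ^^ j) y)) else None)" for y j
  define D where "D y = (tt y, map (w y) [0..<n])" for y
  have "card {A\<in>dyn_join M f P n. A \<inter> E \<noteq> {}} \<le> card ({..<T} \<times> W)"
  proof (rule card_dyn_join_meeting_le[where D = D])
    show "D ` E \<subseteq> {..<T} \<times> W"
    proof
      fix d assume "d \<in> D ` E"
      then obtain y where "y \<in> E" "d = D y" by blast
      have "{j. j < n \<and> w y j \<noteq> None} \<subseteq> {..<tt y} \<union> {j\<in>{..<n}. (f ^^ j) y \<in> - KK}"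
        by (auto simp: w_def)
      then have "count_some (map (w y) [0..<n]) \<le> card ({..<tt y} \<union> {j\<in>{..<n}. (f ^^ j) y \<in> - KK})"
        unfolding count_some_map_upt by (rule card_mono[rotated]) auto
      also have "\<dots> \<le> tt y + visits f (- KK) n y"
        using card_Un_le[of "{..<tt y}"] by (simp add: visits_def)
      also have "\<dots> \<le> T + m" using tt[OF \<open>y \<in> E\<close>] few[OF \<open>y \<in> E\<close>] by (simp add: KK_def)
      finally show "d \<in> {..<T} \<times> W"
        using cell(1) tt(1)[OF \<open>y \<in> E\<close>] by (auto simp: \<open>d = D y\<close> D_def W_def option_words_def w_def)
    qed
    show "finite ({..<T} \<times> W)" using finite_option_words[OF \<open>finite P\<close>] by (simp add: W_def)
    fix y z j p assume "y \<in> E" "z \<in> E" "D y = D z" "j < n" "p \<in> P"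
    then have "w y j = w z j" "tt y = tt z" by (auto simp: D_def map_eq_conv)
    have "cell ((f ^^ j) y) = cell ((f ^^ j) z)"
    proof (cases "w y j = None")
      case True
      then have "tt y \<le> j" "(f ^^ j) y \<in> KK" "(f ^^ j) z \<in> KK"
        using \<open>w y j = w z j\<close> \<open>tt y = tt z\<close> by (auto simp: w_def split: if_splits)
      moreover have "dist ((f ^^ j) y) ((f ^^ j) z) \<le> 2 * \<delta>"
        using tt(2)[OF \<open>y \<in> E\<close>] tt(2)[OF \<open>z \<in> E\<close>] \<open>tt y = tt z\<close> \<open>tt y \<le> j\<close>
        by (intro dist_funpow_le_dyn_ball[where t = "tt y"]) auto
      moreover obtain p' q' where "p' \<in> P" "(f ^^ j) y \<in> K p'" "q' \<in> P" "(f ^^ j) z \<in> K q'"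
        using \<open>(f ^^ j) y \<in> KK\<close> \<open>(f ^^ j) z \<in> KK\<close> by (auto simp: KK_def)
      ultimately have "p' = q'" using sep by force
      with \<open>p' \<in> P\<close> \<open>(f ^^ j) y \<in> K p'\<close> \<open>(f ^^ j) z \<in> K q'\<close> show ?thesis
        using K cell(2) by blast
    qed (use \<open>w y j = w z j\<close> in \<open>auto simp: w_def split: if_splits\<close>)
    then show "(f ^^ j) y \<in> p \<longleftrightarrow> (f ^^ j) z \<in> p" using cell(2)[OF \<open>p \<in> P\<close>] by simp
  qed (use \<open>disjoint P\<close> UNIV in auto)
  then show ?thesis by (simp add: W_def card_cartesian_product)
qed

lemma partition_entropy_dyn_join_le:
  fixes f :: "'a::metric_space \<Rightarrow> 'a" and T m n :: nat and q :: real
  assumes "prob_space M" "space M = UNIV" "f \<in> M \<rightarrow>\<^sub>M M" and P: "finite_meas_partition M P"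
    and "\<And>p. p \<in> P \<Longrightarrow> K p \<subseteq> p"
    and "\<And>p q u v. p \<in> P \<Longrightarrow> q \<in> P \<Longrightarrow> p \<noteq> q \<Longrightarrow> u \<in> K p \<Longrightarrow> v \<in> K q \<Longrightarrow> 2 * \<delta> < dist u v"
    and "E \<in> sets M"
    and "\<And>y. y \<in> E \<Longrightarrow> \<exists>t<T. (f ^^ t) y \<in> dyn_ball f \<delta> x"
    and "\<And>y. y \<in> E \<Longrightarrow> visits f (- (\<Union>p\<in>P. K p)) n y \<le> m"
    and "T \<ge> 1" "0 < q" "q \<le> 1"
  shows "partition_entropy M (dyn_join M f P n)
    \<le> ln T + n * ln (1 + card P * q) + (T + m) * ln (1 / q) + measure M (space M - E) * (n * ln (card P)) + 2"
proof -
  define Q where "Q = dyn_join M f P n"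
  define W where "W = {ws\<in>option_words P n. count_some ws \<le> T + m}"
  have "finite P" "disjoint P" "P \<subseteq> sets M" "\<Union>P = UNIV"
    using P assms(2) by (auto simp: finite_meas_partition_def)
  then have "card P \<ge> 1" by (auto simp: Suc_le_eq card_gt_0_iff)
  have "replicate n None \<in> W" by (auto simp: W_def option_words_def count_some_def)
  then have "card W \<ge> 1"
    using finite_option_words[OF \<open>finite P\<close>] by (auto simp: W_def Suc_le_eq card_gt_0_iff)
  have "partition_entropy M Q \<le> ln (T * card W) + measure M (space M - E) * ln (card P ^ n) + 2"
  proof (rule partition_entropy_split_le)
    show "card {A\<in>Q. A \<inter> E \<noteq> {}} \<le> T * card W"
      unfolding Q_def W_def using assms(2,4-6,8,9) by (rule card_blocks_meeting_returning_le)
    show "finite Q" "card Q \<le> card P ^ n" using card_dyn_join_le[OF \<open>finite P\<close>] by (auto simp: Q_def)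
    show "Q \<subseteq> sets M" unfolding Q_def using \<open>P \<subseteq> sets M\<close> assms(3) by (rule dyn_join_sets)
    show "disjoint Q" unfolding Q_def using \<open>disjoint P\<close> by (rule disjoint_dyn_join)
    show "1 \<le> T * card W" using \<open>T \<ge> 1\<close> \<open>card W \<ge> 1\<close> by simp
    show "1 \<le> card P ^ n" using \<open>card P \<ge> 1\<close> by simp
  qed (use assms in simp_all)
  also have "ln (T * card W) = ln T + ln (card W)"
    using \<open>T \<ge> 1\<close> \<open>card W \<ge> 1\<close> by (simp add: ln_mult)
  also have "ln (card W) \<le> n * ln (1 + card P * q) + (T + m) * ln (1 / q)"
    unfolding W_def using ln_card_sparse_option_words_le[OF \<open>finite P\<close> assms(11,12), of n "T + m"]
    by simp
  also have "ln (real (card P ^ n)) = n * ln (card P)"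
    using \<open>card P \<ge> 1\<close> by (simp add: ln_realpow)
  finally show ?thesis by (simp add: Q_def)
qed

lemma finite_meas_partition_closed_pieces:
  fixes M :: "'a::metric_space measure"
  assumes "compact (UNIV :: 'a set)" "finite_measure M" "sets M = sets borel"
    and P: "finite_meas_partition M P" and "e > 0"
  obtains K \<gamma> where "\<And>p. p \<in> P \<Longrightarrow> closed (K p) \<and> K p \<subseteq> p"
    and "measure M (space M - (\<Union>p\<in>P. K p)) \<le> e" and "\<gamma> > 0"
    and "\<And>p q u v. p \<in> P \<Longrightarrow> q \<in> P \<Longrightarrow> p \<noteq> q \<Longrightarrow> u \<in> K p \<Longrightarrow> v \<in> K q \<Longrightarrow> \<gamma> \<le> dist u v"
proof -
  interpret finite_measure M by fact
  have "finite P" "disjoint P" "P \<subseteq> sets M" "\<Union>P = space M"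
    using P by (auto simp: finite_meas_partition_def)
  have "space M = UNIV" using sets_eq_imp_space_eq[OF assms(3)] by simp
  then have "P \<noteq> {}" using \<open>\<Union>P = space M\<close> by auto
  then have "card P \<ge> 1" using \<open>finite P\<close> by (simp add: Suc_le_eq card_gt_0_iff)
  have "\<forall>p\<in>P. \<exists>F. closed F \<and> F \<subseteq> p \<and> measure M (p - F) < e / card P"
  proof
    fix p assume "p \<in> P"
    have "e / card P > 0" using \<open>e > 0\<close> \<open>card P \<ge> 1\<close> by simp
    moreover have "p \<in> sets M" using \<open>P \<subseteq> sets M\<close> \<open>p \<in> P\<close> by blast
    ultimately obtain F U where FU: "closed F" "open U" "F \<subseteq> p" "p \<subseteq> U" "measure M (U - F) < e / card P"
      using regular_set_borel[OF assms(2,3) \<open>p \<in> sets M\<close>, unfolded regular_set_def, rule_format,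
          of "e / card P"] by blast
    have "measure M (p - F) \<le> measure M (U - F)"
      using FU(1,2,4) assms(3) by (intro finite_measure_mono) (auto simp: borel_open borel_closed)
    then show "\<exists>F. closed F \<and> F \<subseteq> p \<and> measure M (p - F) < e / card P"
      using FU(1,3,5) by (intro exI[of _ F]) simp
  qed
  from bchoice[OF this] obtain K
    where K: "\<forall>p\<in>P. closed (K p) \<and> K p \<subseteq> p \<and> measure M (p - K p) < e / card P"
    by blast
  have K_sets: "p - K p \<in> sets M" if "p \<in> P" for p
    using K \<open>P \<subseteq> sets M\<close> that assms(3) by (auto simp: borel_closed)
  have "space M - (\<Union>p\<in>P. K p) \<subseteq> (\<Union>p\<in>P. p - K p)" using \<open>\<Union>P = space M\<close> by blast
  then have "measure M (space M - (\<Union>p\<in>P. K p)) \<le> measure M (\<Union>p\<in>P. p - K p)"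
    using K_sets \<open>finite P\<close> by (intro finite_measure_mono) auto
  also have "\<dots> \<le> (\<Sum>p\<in>P. measure M (p - K p))"
    using K_sets \<open>finite P\<close> by (intro measure_UNION_le) auto
  also have "\<dots> \<le> (\<Sum>p\<in>P. e / card P)" using K by (intro sum_mono) (auto intro: less_imp_le)
  also have "\<dots> = e" using \<open>card P \<ge> 1\<close> by simp
  finally have "measure M (space M - (\<Union>p\<in>P. K p)) \<le> e" .
  moreover have K_closed: "closed (K p)" and K_sub: "K p \<subseteq> p" if "p \<in> P" for p
    using K that by auto
  moreover have "K p \<inter> K q = {}" if "p \<in> P" "q \<in> P" "p \<noteq> q" for p q
    using disjointD[OF \<open>disjoint P\<close> that] K_sub that by blast
  then have "\<exists>\<gamma>>0. \<forall>p\<in>P. \<forall>q\<in>P. p \<noteq> q \<longrightarrow> (\<forall>u\<in>K p. \<forall>v\<in>K q. \<gamma> \<le> dist u v)"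
    using K_closed by (intro finite_closed_sets_separated[OF assms(1) \<open>finite P\<close>])
  then obtain \<gamma> where "\<gamma> > 0" "\<forall>p\<in>P. \<forall>q\<in>P. p \<noteq> q \<longrightarrow> (\<forall>u\<in>K p. \<forall>v\<in>K q. \<gamma> \<le> dist u v)"
    by blast
  ultimately show ?thesis by (intro that[of K \<gamma>]) auto
qed

lemma partition_entropy_dyn_join_le_hitting:
  fixes f :: "'a::metric_space \<Rightarrow> 'a" and x :: 'a and P :: "'a set set" and K :: "'a set \<Rightarrow> 'a set"
    and T n :: nat and q \<delta> \<eta> :: real
  defines "V \<equiv> {y. \<exists>t<T. (f ^^ t) y \<in> dyn_ball f \<delta> x}" and "S \<equiv> - (\<Union>p\<in>P. K p)"
  assumes "prob_space M" "space M = UNIV" "invariant_measure M f" and P: "finite_meas_partition M P"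
    and "\<And>p. p \<in> P \<Longrightarrow> K p \<subseteq> p" "S \<in> sets M"
    and "\<And>p q u v. p \<in> P \<Longrightarrow> q \<in> P \<Longrightarrow> p \<noteq> q \<Longrightarrow> u \<in> K p \<Longrightarrow> v \<in> K q \<Longrightarrow> 2 * \<delta> < dist u v"
    and "dyn_ball f \<delta> x \<in> sets M"
    and "T \<ge> 1" "0 < q" "q \<le> 1" "\<eta> > 0" "n \<ge> 1"
  shows "partition_entropy M (dyn_join M f P n)
    \<le> ln T + n * ln (1 + card P * q) + (T + \<eta> * n) * ln (1 / q)
      + (1 - measure M V + measure M S / \<eta>) * (n * ln (card P)) + 2"
proof -
  interpret prob_space M by fact
  have f: "f \<in> M \<rightarrow>\<^sub>M M" using assms(5) by (simp add: invariant_measure_def)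
  define m where "m = nat \<lfloor>\<eta> * n\<rfloor>"
  define E where "E = V \<inter> {y. visits f S n y < \<eta> * n}"
  have "(\<Union>t<T. (f ^^ t) -` dyn_ball f \<delta> x \<inter> space M) \<in> sets M"
    using measurable_sets[OF measurable_compose_n[OF f] assms(10)] by (intro sets.finite_UN) auto
  moreover have "V = (\<Union>t<T. (f ^^ t) -` dyn_ball f \<delta> x \<inter> space M)" using assms(4) by (auto simp: V_def)
  ultimately have V_sets: "V \<in> sets M" by simp
  have visits_sets: "{y\<in>space M. \<eta> * n \<le> visits f S n y} \<in> sets M"
    using borel_measurable_visits[OF f assms(8)] by measurable
  have E_sets: "E \<in> sets M"
  proof -
    have "E = V - {y\<in>space M. \<eta> * n \<le> visits f S n y}" using assms(4) by (auto simp: E_def)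
    then show ?thesis using V_sets visits_sets by auto
  qed
  have "partition_entropy M (dyn_join M f P n)
      \<le> ln T + n * ln (1 + card P * q) + (T + m) * ln (1 / q) + measure M (space M - E) * (n * ln (card P)) + 2"
  proof (rule partition_entropy_dyn_join_le[OF assms(3,4) f P assms(7,9) E_sets _ _ assms(11-13)])
    show "\<exists>t<T. (f ^^ t) y \<in> dyn_ball f \<delta> x" if "y \<in> E" for y using that by (simp add: E_def V_def)
    show "visits f (- (\<Union>p\<in>P. K p)) n y \<le> m" if "y \<in> E" for y
      using that by (simp add: E_def m_def S_def le_nat_floor less_imp_le)
  qed
  also have "(T + m) * ln (1 / q) \<le> (T + \<eta> * n) * ln (1 / q)"
    using assms(12,13,14) by (intro mult_right_mono) (auto simp: m_def of_nat_floor)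
  also have "measure M (space M - E) \<le> 1 - measure M V + measure M S / \<eta>"
  proof -
    have "space M - E \<subseteq> (space M - V) \<union> {y\<in>space M. \<eta> * n \<le> visits f S n y}"
      by (auto simp: E_def)
    then have "measure M (space M - E) \<le> measure M (space M - V) + measure M {y\<in>space M. \<eta> * n \<le> visits f S n y}"
      using V_sets visits_sets by (meson finite_measure_mono measure_Un_le order_trans sets.Diff sets.Un sets.top)
    also have "measure M {y\<in>space M. \<eta> * n \<le> visits f S n y} \<le> n * measure M S / (\<eta> * n)"
      using assms(14,15) by (intro measure_visits_ge_le[OF assms(3,5,8)]) auto
    finally show ?thesis using assms(15) prob_compl[OF V_sets] by simp
  qed
  then have "measure M (space M - E) * (n * ln (card P)) \<le> (1 - measure M V + measure M S / \<eta>) * (n * ln (card P))"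
  proof (rule mult_right_mono)
    have "finite P" "P \<noteq> {}" using P assms(4) by (auto simp: finite_meas_partition_def)
    then show "0 \<le> n * ln (card P)" by (simp add: Suc_le_eq card_gt_0_iff)
  qed
  finally show ?thesis by simp
qed

text \<open>The non-expansiveness of \<open>\<mu>\<close> is used exactly once: the dynamical ball of radius \<open>\<delta>\<close>,
  chosen below the separation of the pieces, has positive measure, so by ergodicity almost every
  orbit enters it.\<close>
lemma not_expansive_hitting_pieces:
  fixes f :: "'a::metric_space \<Rightarrow> 'a"
  assumes cU: "compact (UNIV :: 'a set)" and sb: "sets M = sets borel" and "prob_space M"
    and erg: "ergodic M f" and nexp: "\<not> expansive_measure M f"
    and P: "finite_meas_partition M P" and "a > 0" "b > 0"
  obtains K \<delta> x T where "\<And>p. p \<in> P \<Longrightarrow> K p \<subseteq> p" "- (\<Union>p\<in>P. K p) \<in> sets M"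
    and "measure M (- (\<Union>p\<in>P. K p)) \<le> a"
    and "\<And>p q u v. p \<in> P \<Longrightarrow> q \<in> P \<Longrightarrow> p \<noteq> q \<Longrightarrow> u \<in> K p \<Longrightarrow> v \<in> K q \<Longrightarrow> 2 * \<delta> < dist u v"
    and "dyn_ball f \<delta> x \<in> sets M" "T \<ge> 1" "1 - b \<le> measure M {y. \<exists>t<T. (f ^^ t) y \<in> dyn_ball f \<delta> x}"
proof -
  interpret prob_space M by fact
  have UNIV: "space M = UNIV" using sets_eq_imp_space_eq[OF sb] by simp
  have f: "f \<in> M \<rightarrow>\<^sub>M M" using erg by (simp add: ergodic_def invariant_measure_def)
  obtain K \<gamma> where K: "\<And>p. p \<in> P \<Longrightarrow> closed (K p) \<and> K p \<subseteq> p"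
    and S: "measure M (space M - (\<Union>p\<in>P. K p)) \<le> a" and "\<gamma> > 0"
    and sep: "\<And>p q u v. p \<in> P \<Longrightarrow> q \<in> P \<Longrightarrow> p \<noteq> q \<Longrightarrow> u \<in> K p \<Longrightarrow> v \<in> K q \<Longrightarrow> \<gamma> \<le> dist u v"
    using finite_meas_partition_closed_pieces[OF cU finite_measure_axioms sb P \<open>a > 0\<close>] by blast
  define \<delta> where "\<delta> = \<gamma> / 3"
  have "\<delta> > 0" using \<open>\<gamma> > 0\<close> by (simp add: \<delta>_def)
  then obtain x where "emeasure M (dyn_ball f \<delta> x) \<noteq> 0"
    using nexp unfolding expansive_measure_def by blast
  moreover have ball_sets: "dyn_ball f \<delta> x \<in> sets M" using f sb by (rule dyn_ball_sets)
  ultimately have "measure M (dyn_ball f \<delta> x) > 0"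
    by (simp add: emeasure_eq_measure less_le)
  then obtain T where "T \<ge> 1" "1 - b \<le> measure M {y. \<exists>t<T. (f ^^ t) y \<in> dyn_ball f \<delta> x}"
    using ergodic_hits_before[OF erg \<open>prob_space M\<close> UNIV ball_sets _ \<open>b > 0\<close>] by blast
  moreover have "closed (\<Union>p\<in>P. K p)"
    using K P by (intro closed_UN) (auto simp: finite_meas_partition_def)
  then have "- (\<Union>p\<in>P. K p) \<in> sets M" unfolding sb by (intro borel_open open_Compl)
  moreover have "2 * \<delta> < dist u v" if "p \<in> P" "q \<in> P" "p \<noteq> q" "u \<in> K p" "v \<in> K q" for p q u v
    using sep[OF that] \<open>\<gamma> > 0\<close> by (simp add: \<delta>_def)
  ultimately show ?thesis
    using that[of K \<delta> x T] K S ball_sets UNIV by (simp add: Compl_eq_Diff_UNIV)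
qed

lemma partition_entropy_dyn_join_le_affine:
  fixes f :: "'a::metric_space \<Rightarrow> 'a" and q \<eta> e :: real
  assumes "compact (UNIV :: 'a set)" and sb: "sets M = sets borel" and "prob_space M"
    and erg: "ergodic M f" and "\<not> expansive_measure M f"
    and P: "finite_meas_partition M P" and q: "0 < q" "q \<le> 1" and "\<eta> > 0" "e > 0"
  obtains C where "\<And>n. n \<ge> 1 \<Longrightarrow> partition_entropy M (dyn_join M f P n)
    \<le> C + n * (ln (1 + card P * q) + \<eta> * ln (1 / q) + 2 * e * ln (card P))"
proof -
  interpret prob_space M by fact
  have UNIV: "space M = UNIV" using sets_eq_imp_space_eq[OF sb] by simp
  have inv: "invariant_measure M f" using erg by (simp add: ergodic_def)
  obtain K \<delta> x T where K: "\<And>p. p \<in> P \<Longrightarrow> K p \<subseteq> p" and S_sets: "- (\<Union>p\<in>P. K p) \<in> sets M"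
    and S: "measure M (- (\<Union>p\<in>P. K p)) \<le> e * \<eta>"
    and sep: "\<And>p q u v. p \<in> P \<Longrightarrow> q \<in> P \<Longrightarrow> p \<noteq> q \<Longrightarrow> u \<in> K p \<Longrightarrow> v \<in> K q \<Longrightarrow> 2 * \<delta> < dist u v"
    and ball_sets: "dyn_ball f \<delta> x \<in> sets M" and "T \<ge> 1"
    and hit: "1 - e \<le> measure M {y. \<exists>t<T. (f ^^ t) y \<in> dyn_ball f \<delta> x}"
    using not_expansive_hitting_pieces[OF assms(1-6) mult_pos_pos[OF \<open>e > 0\<close> \<open>\<eta> > 0\<close>] \<open>e > 0\<close>]
    by blast
  have "finite P" "P \<noteq> {}" using P UNIV by (auto simp: finite_meas_partition_def)
  then have "ln (card P) \<ge> 0" by (simp add: Suc_le_eq card_gt_0_iff)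
  show ?thesis
  proof (rule that[of "ln T + T * ln (1 / q) + 2"])
    fix n :: nat assume "n \<ge> 1"
    have "partition_entropy M (dyn_join M f P n)
        \<le> ln T + n * ln (1 + card P * q) + (T + \<eta> * n) * ln (1 / q)
          + (1 - measure M {y. \<exists>t<T. (f ^^ t) y \<in> dyn_ball f \<delta> x}
             + measure M (- (\<Union>p\<in>P. K p)) / \<eta>) * (n * ln (card P)) + 2"
      by (rule partition_entropy_dyn_join_le_hitting[OF \<open>prob_space M\<close> UNIV inv P K S_sets sep
            ball_sets \<open>T \<ge> 1\<close> q \<open>\<eta> > 0\<close> \<open>n \<ge> 1\<close>])
    also have "\<dots> \<le> ln T + n * ln (1 + card P * q) + (T + \<eta> * n) * ln (1 / q)
          + (2 * e) * (n * ln (card P)) + 2"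
    proof -
      have "measure M (- (\<Union>p\<in>P. K p)) / \<eta> \<le> e" using S \<open>\<eta> > 0\<close> by (simp add: divide_le_eq)
      then show ?thesis
        using hit \<open>ln (card P) \<ge> 0\<close> by (intro add_mono mult_right_mono order_refl) auto
    qed
    finally show "partition_entropy M (dyn_join M f P n)
        \<le> ln T + T * ln (1 / q) + 2 + n * (ln (1 + card P * q) + \<eta> * ln (1 / q) + 2 * e * ln (card P))"
      by (simp add: algebra_simps)
  qed
qed

lemma eventually_partition_entropy_dyn_join_le:
  fixes f :: "'a::metric_space \<Rightarrow> 'a" and \<epsilon> :: real
  assumes "compact (UNIV :: 'a set)" "sets M = sets borel" "prob_space M" "ergodic M f"
    and "\<not> expansive_measure M f" and P: "finite_meas_partition M P" and "\<epsilon> > 0"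
  shows "eventually (\<lambda>n. partition_entropy M (dyn_join M f P n) \<le> \<epsilon> * n) sequentially"
proof -
  define k where "k = real (card P)"
  have "finite P" "P \<noteq> {}"
    using P sets_eq_imp_space_eq[OF assms(2)] by (auto simp: finite_meas_partition_def)
  then have "k \<ge> 1" by (simp add: k_def Suc_le_eq card_gt_0_iff)
  define q where "q = min 1 (\<epsilon> / (4 * k))"
  have q: "0 < q" "q \<le> 1" "k * q \<le> \<epsilon> / 4"
    using \<open>k \<ge> 1\<close> \<open>\<epsilon> > 0\<close> by (auto simp: q_def min_def field_simps)
  then have "ln (1 + k * q) \<le> \<epsilon> / 4"
    using ln_le_minus_one[of "1 + k * q"] \<open>k \<ge> 1\<close> by (simp add: add_pos_pos)
  define \<eta> where "\<eta> = \<epsilon> / (4 * (ln (1 / q) + 1))"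
  have "ln (1 / q) \<ge> 0" using q by simp
  then have \<eta>: "\<eta> > 0" "\<eta> * ln (1 / q) \<le> \<epsilon> / 4"
    using \<open>\<epsilon> > 0\<close> by (auto simp: \<eta>_def field_simps)
  define e where "e = \<epsilon> / (8 * (ln k + 1))"
  have "ln k \<ge> 0" using \<open>k \<ge> 1\<close> by simp
  then have e: "e > 0" "2 * e * ln k \<le> \<epsilon> / 4"
    using \<open>\<epsilon> > 0\<close> by (auto simp: e_def field_simps)
  obtain C where C: "\<And>n. n \<ge> 1 \<Longrightarrow> partition_entropy M (dyn_join M f P n)
      \<le> C + n * (ln (1 + k * q) + \<eta> * ln (1 / q) + 2 * e * ln k)"
    using partition_entropy_dyn_join_le_affine[OF assms(1-6) q(1,2) \<eta>(1) e(1)] unfolding k_def by blast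
  have rate: "ln (1 + k * q) + \<eta> * ln (1 / q) + 2 * e * ln k \<le> 3 * \<epsilon> / 4"
    using \<open>ln (1 + k * q) \<le> \<epsilon> / 4\<close> \<eta>(2) e(2) by linarith
  show ?thesis
    using eventually_ge_at_top[of "max 1 (nat \<lceil>4 * C / \<epsilon>\<rceil>)"]
  proof eventually_elim
    case (elim n)
    then have "C \<le> n * (\<epsilon> / 4)" using \<open>\<epsilon> > 0\<close> by (simp add: field_simps)
    moreover have "n * (ln (1 + k * q) + \<eta> * ln (1 / q) + 2 * e * ln k) \<le> n * (3 * \<epsilon> / 4)"
      using rate by (intro mult_left_mono) auto
    ultimately show ?case using C[of n] elim by (simp add: field_simps)
  qed
qed

lemma entropy_wrt_eq_0I:
  assumes "prob_space M" "f \<in> M \<rightarrow>\<^sub>M M" "P \<subseteq> sets M"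
    and le: "\<And>\<epsilon>::real. \<epsilon> > 0 \<Longrightarrow> eventually (\<lambda>n. partition_entropy M (dyn_join M f P n) \<le> \<epsilon> * n) sequentially"
  shows "entropy_wrt M f P = 0"
proof -
  have "(\<lambda>n. partition_entropy M (dyn_join M f P n) / n) \<longlonglongrightarrow> 0"
  proof (rule order_tendstoI)
    fix \<epsilon> :: real assume "\<epsilon> > 0"
    then have "eventually (\<lambda>n. partition_entropy M (dyn_join M f P n) \<le> \<epsilon> / 2 * n \<and> n \<ge> 1) sequentially"
      using le[of "\<epsilon> / 2"] by (intro eventually_conj eventually_ge_at_top) simp_all
    then show "eventually (\<lambda>n. partition_entropy M (dyn_join M f P n) / n < \<epsilon>) sequentially"
    proof eventually_elim
      case (elim n)
      then have "partition_entropy M (dyn_join M f P n) / n \<le> \<epsilon> / 2"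
        by (simp add: pos_divide_le_eq)
      then show ?case using \<open>\<epsilon> > 0\<close> by linarith
    qed
  next
    fix \<epsilon> :: real assume "\<epsilon> < 0"
    have "0 \<le> partition_entropy M (dyn_join M f P n)" for n
      using assms(1) dyn_join_sets[OF assms(3,2)] by (rule partition_entropy_nonneg)
    with \<open>\<epsilon> < 0\<close> show "eventually (\<lambda>n. \<epsilon> < partition_entropy M (dyn_join M f P n) / n) sequentially"
      by (auto intro!: always_eventually less_le_trans[OF _ divide_nonneg_nonneg])
  qed
  then show ?thesis unfolding entropy_wrt_def by (rule limI)
qed

theorem theorem4p1:
  fixes f :: "'a::metric_space \<Rightarrow> 'a" and M :: "'a measure"
  assumes "compact (UNIV :: 'a set)"
    and "continuous_on UNIV f"
    and "sets M = sets borel"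
    and "prob_space M"
    and "invariant_measure M f"
    and "ergodic M f"
    and "metric_entropy M f > 0"
  shows "expansive_measure M f"
proof (rule ccontr)
  assume "\<not> expansive_measure M f"
  have "entropy_wrt M f P = 0" if "finite_meas_partition M P" for P
  proof (rule entropy_wrt_eq_0I)
    show "P \<subseteq> sets M" using that by (simp add: finite_meas_partition_def)
    show "f \<in> M \<rightarrow>\<^sub>M M" using assms(5) by (simp add: invariant_measure_def)
  qed (use assms \<open>\<not> expansive_measure M f\<close> that in \<open>auto intro: eventually_partition_entropy_dyn_join_le\<close>)
  then have "metric_entropy M f \<le> 0"
    unfolding metric_entropy_def by (intro SUP_least) simp
  with assms(7) show False by simp
qed

end
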